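(* Let $n\ge2$, let $(b_n,\ldots,b_1)$ be a restricted sequence of length $n$ and $(a_{n-1},\ldots,a_1)$ a restricted sequence of length $n-1$, and let $j$ be a positive integer with $j\le b_n-2<a_{n-1}$. Then $\langle e_{(b_n,\ldots,b_1)},e'_{(j,a_{n-1},\ldots,a_1)}\rangle_n=0$.
   Context: $D_n$: non-crossing perfect matchings of $\{1,\ldots,2n\}$ (non-crossing arcs in the upper half-plane with endpoints $1,\ldots,2n$), $D_0=\{\phi\}$. For $1\le k\le 2n+1$, $l_k:D_n\to D_{n+1}$: $l_k(\alpha)$ matches $k$ with $k+1$, old point $i$ becomes $i$ if $i<k$ and $i+2$ if $i\ge k$. Restricted sequence of $\alpha\in D_n$: let $k_n$ be the smallest $k$ with $k$ matched to $k+1$; it is $(k_n,k_{n-1},\ldots,k_1)$ with $(k_{n-1},\ldots,k_1)$ the restricted sequence of $\alpha$ with that arc removed (empty for $\phi$). This is a bijection from $D_n$ to restricted sequences of length $n$ (these are the positive integer sequences with $k_1=1$, $k_{i+1}\le k_i+1$); $e_{(a_n,\ldots,a_1)}$ denotes the corresponding diagram. $V_n$: $\mathbb{Q}(q)$-vector space with basis $D_n$ ($q$ an indeterminate), $l_k$ extended linearly. Markov form: bilinear extension of $\langle\alpha,\beta\rangle_n=q^c$, $c$ the number of closed curves obtained by gluing $\alpha$ to the reflection of $\beta$ in the lower half-plane along $1,\ldots,2n$. $\Delta_{-1}=0$, $\Delta_0=1$, $\Delta_k=q\Delta_{k-1}-\Delta_{k-2}$. $e'$: $e'_{(1)}=e_{(1)}$;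 for $n\ge2$, $e'_{(a_n,\ldots,a_1)}=l_{a_n}(e'_{(a_{n-1},\ldots,a_1)})-\frac{\Delta_{a_n-2}}{\Delta_{a_n-1}}e'_{(a_n-1,a_{n-1},\ldots,a_1)}$ if $a_n\ge2$, and $e'_{(1,a_{n-1},\ldots,a_1)}=l_1(e'_{(a_{n-1},\ldots,a_1)})$. *)

theory Defs
  imports "HOL-Computational_Algebra.Polynomial" "HOL-Computational_Algebra.Fraction_Field"
begin

type_synonym qf = "rat poly fract"

definition qq :: qf where "qq = Fract [:0, 1:] 1"

text \<open>A diagram on points 1..2n is a list d of length 2n; the partner of point i is d ! (i-1).\<close>
definition partner :: "nat list \<Rightarrow> nat \<Rightarrow> nat" where
  "partner d i = d ! (i - 1)"

definition is_diagram :: "nat \<Rightarrow> nat list \<Rightarrow> bool" where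
  "is_diagram n d \<longleftrightarrow> length d = 2 * n \<and>
     (\<forall>i\<in>{1..2*n}. partner d i \<in> {1..2*n} \<and> partner d i \<noteq> i \<and> partner d (partner d i) = i) \<and>
     (\<forall>a\<in>{1..2*n}. \<forall>b\<in>{1..2*n}. \<not> (a < b \<and> b < partner d a \<and> partner d a < partner d b))"

definition D :: "nat \<Rightarrow> nat list set" where
  "D n = {d. is_diagram n d}"

definition shift :: "nat \<Rightarrow> nat \<Rightarrow> nat" where
  "shift k i = (if i < k then i else i + 2)"

definition unshift :: "nat \<Rightarrow> nat \<Rightarrow> nat" where
  "unshift k j = (if j < k then j else j - 2)"

definition lk :: "nat \<Rightarrow> nat list \<Rightarrow> nat list" where
  "lk k d = map (\<lambda>j. if j = k then k + 1 else if j = k + 1 then k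
                     else shift k (partner d (unshift k j))) [1..<length d + 3]"

text \<open>Removing the arc (k,k+1) (inverse of l_k).\<close>
definition remarc :: "nat \<Rightarrow> nat list \<Rightarrow> nat list" where
  "remarc k d = map (\<lambda>j. unshift k (partner d (shift k j))) [1..<length d - 1]"

primrec rseq_aux :: "nat \<Rightarrow> nat list \<Rightarrow> nat list" where
  "rseq_aux 0 d = []"
| "rseq_aux (Suc m) d =
     (let k = (LEAST k. 1 \<le> k \<and> partner d k = k + 1) in k # rseq_aux m (remarc k d))"

text \<open>Restricted sequence (k_n, ..., k_1) of a diagram, as the list [k_n, ..., k_1].\<close>
definition rseq :: "nat list \<Rightarrow> nat list" where
  "rseq d = rseq_aux (length d div 2) d"

definition restricted :: "nat \<Rightarrow> nat list \<Rightarrow> bool" where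
  "restricted n s \<longleftrightarrow> (\<exists>d\<in>D n. rseq d = s)"

definition e :: "nat list \<Rightarrow> nat list" where
  "e s = (THE d. d \<in> D (length s) \<and> rseq d = s)"

text \<open>Vectors of V_n: coefficient functions on diagrams (supported on D_n).\<close>
type_synonym vec = "nat list \<Rightarrow> qf"

definition ind :: "nat list \<Rightarrow> vec" where
  "ind d = (\<lambda>x. if x = d then 1 else 0)"

text \<open>Linear extension of l_k.\<close>
definition Lk :: "nat \<Rightarrow> vec \<Rightarrow> vec" where
  "Lk k v = (\<lambda>\<beta>. \<Sum>\<alpha>\<in>{\<alpha>\<in>D (length \<beta> div 2 - 1). lk k \<alpha> = \<beta>}. v \<alpha>)"

text \<open>Number of closed curves when gluing alpha with the reflection of beta.\<close>
definition loops :: "nat list \<Rightarrow> nat list \<Rightarrow> nat" where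
  "loops \<alpha> \<beta> = card ({1..length \<alpha>} //
     (({(i, partner \<alpha> i) | i. i \<in> {1..length \<alpha>}} \<union> {(i, partner \<beta> i) | i. i \<in> {1..length \<alpha>}})\<^sup>*))"

definition markov :: "nat \<Rightarrow> vec \<Rightarrow> vec \<Rightarrow> qf" where
  "markov n v w = (\<Sum>\<alpha>\<in>D n. \<Sum>\<beta>\<in>D n. v \<alpha> * w \<beta> * qq ^ loops \<alpha> \<beta>)"

text \<open>Delta k here is Delta_k; Delta_{-1} = 0 gives Delta_1 = q.\<close>
fun Delta :: "nat \<Rightarrow> qf" where
  "Delta 0 = 1"
| "Delta (Suc 0) = qq"
| "Delta (Suc (Suc k)) = qq * Delta (Suc k) - Delta k"

text \<open>epa v a = e'_{(a, rest)} where v = e'_{rest}.\<close>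
primrec epa :: "vec \<Rightarrow> nat \<Rightarrow> vec" where
  "epa v 0 = (\<lambda>_. 0)"
| "epa v (Suc a) = (if a = 0 then Lk 1 v
     else (\<lambda>x. Lk (Suc a) v x - (Delta (a - 1) / Delta a) * epa v a x))"

fun ep :: "nat list \<Rightarrow> vec" where
  "ep [] = ind []"
| "ep [a] = ind (e [a])"
| "ep (a # b # r) = epa (ep (b # r)) a"

end

theory Submission
  imports Defs
begin

text \<open>Gluing \<open>\<beta>\<close> to \<open>l\<^sub>k \<alpha>\<close> produces the loops obtained by gluing \<open>cap\<^sub>k \<beta>\<close> (delete the points
  k, k+1 of \<open>\<beta>\<close> and join their partners) to \<open>\<alpha>\<close>, plus the loop {k, k+1} when it is an arc of
  \<open>\<beta>\<close>. Hence \<open>\<langle>\<beta>, l\<^sub>k \<alpha>\<rangle> = q\<^sup>\<epsilon> \<langle>cap\<^sub>k \<beta>, \<alpha>\<rangle>\<close> with \<open>\<epsilon> \<in> {0, 1}\<close>. Expanding \<open>e'\<close> by its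
  recursion, induction on the restricted sequence s shows that \<open>e'\<^sub>s\<close> is orthogonal to every
  perfect matching with an arc (m, m+1), m < \<open>s\<^sub>n\<close>: the terms \<open>l\<^sub>i\<close> with i \<le> m-2 or i \<ge> m+2 vanish
  because \<open>cap\<^sub>i\<close> keeps an early arc, while those with i = m-1, m, m+1 contribute \<open>X, qX, X\<close> and
  cancel by \<open>\<Delta>\<^sub>m = q\<Delta>\<^sub>m\<^sub>-\<^sub>1 - \<Delta>\<^sub>m\<^sub>-\<^sub>2\<close>. The theorem only involves the terms with
  \<open>i \<le> j \<le> b\<^sub>n - 2\<close>: the first arc of \<open>e\<^sub>b\<close> is at \<open>b\<^sub>n\<close>, and \<open>cap\<^sub>i\<close> moves it to \<open>b\<^sub>n - 2 < a\<^sub>n\<^sub>-\<^sub>1\<close>.\<close>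

section \<open>Perfect matchings and the insertion of an arc\<close>

lemma shift_unshift: "x \<noteq> k \<Longrightarrow> x \<noteq> k + 1 \<Longrightarrow> shift k (unshift k x) = x"
  by (auto simp: shift_def unshift_def)

lemma unshift_shift [simp]: "unshift k (shift k x) = x"
  by (simp add: shift_def unshift_def)

lemma shift_neq [simp]: "shift k x \<noteq> k" "shift k x \<noteq> k + 1" "shift k x \<noteq> Suc k"
  by (auto simp: shift_def)

lemma shift_less_shift_iff [simp]: "shift k x < shift k y \<longleftrightarrow> x < y"
  by (auto simp: shift_def)

lemma shift_eq_shift_iff [simp]: "shift k x = shift k y \<longleftrightarrow> x = y"
  by (auto simp: shift_def)

lemma shift_in_range: "x \<in> {1..2*n} \<Longrightarrow> shift k x \<in> {1..2 * Suc n}"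
  by (auto simp: shift_def)

lemma unshift_in_range:
  "z \<in> {1..2 * Suc n} \<Longrightarrow> z \<noteq> k \<Longrightarrow> z \<noteq> k + 1 \<Longrightarrow> 1 \<le> k \<Longrightarrow> k \<le> 2*n + 1
    \<Longrightarrow> unshift k z \<in> {1..2*n}"
  by (auto simp: unshift_def)

lemma shift_image: "1 \<le> k \<Longrightarrow> k \<le> 2*n + 1 \<Longrightarrow> shift k ` {1..2*n} = {1..2 * Suc n} - {k, k + 1}"
proof
  show "{1..2 * Suc n} - {k, k + 1} \<subseteq> shift k ` {1..2*n}" if "1 \<le> k" "k \<le> 2*n + 1"
  proof
    fix z assume "z \<in> {1..2 * Suc n} - {k, k + 1}"
    then show "z \<in> shift k ` {1..2*n}"
      using unshift_in_range[of z n k] shift_unshift[of z k] that by (intro image_eqI) auto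
  qed
qed (use shift_in_range in auto)

definition matching :: "nat \<Rightarrow> nat list \<Rightarrow> bool" where
  "matching n d \<longleftrightarrow> length d = 2 * n \<and>
     (\<forall>i\<in>{1..2*n}. partner d i \<in> {1..2*n} \<and> partner d i \<noteq> i \<and> partner d (partner d i) = i)"

lemma matching_length: "matching n d \<Longrightarrow> length d = 2 * n"
  by (simp add: matching_def)

lemma matching_partner:
  assumes "matching n d" "i \<in> {1..2*n}"
  shows "partner d i \<in> {1..2*n}" "partner d i \<noteq> i" "partner d (partner d i) = i"
  using assms by (auto simp: matching_def)

lemma matching_partner_eq_iff:
  "matching n d \<Longrightarrow> x \<in> {1..2*n} \<Longrightarrow> y \<in> {1..2*n} \<Longrightarrow> partner d x = y \<longleftrightarrow> partner d y = x"
  using matching_partner(3) by metis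

lemma in_D_iff: "d \<in> D n \<longleftrightarrow> matching n d \<and>
    (\<forall>a\<in>{1..2*n}. \<forall>b\<in>{1..2*n}. \<not> (a < b \<and> b < partner d a \<and> partner d a < partner d b))"
  by (simp add: D_def is_diagram_def matching_def)

lemma D_imp_matching: "d \<in> D n \<Longrightarrow> matching n d"
  by (simp add: in_D_iff)

lemma D_noncrossing:
  "d \<in> D n \<Longrightarrow> a \<in> {1..2*n} \<Longrightarrow> b \<in> {1..2*n} \<Longrightarrow> a < b \<Longrightarrow> b < partner d a
    \<Longrightarrow> \<not> partner d a < partner d b"
  by (auto simp: in_D_iff)

lemma partner_ext:
  assumes "length d = length d'" and "\<And>x. 1 \<le> x \<Longrightarrow> x \<le> length d \<Longrightarrow> partner d x = partner d' x"
  shows "d = d'"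
proof (rule nth_equalityI)
  fix k assume "k < length d"
  then show "d ! k = d' ! k" using assms(2)[of "k + 1"] by (simp add: partner_def)
qed (fact assms(1))

lemma finite_D: "finite (D n)"
proof (rule finite_subset)
  show "D n \<subseteq> {xs. set xs \<subseteq> {0..2*n} \<and> length xs = 2*n}"
  proof safe
    fix d x assume d: "d \<in> D n" and "x \<in> set d"
    then obtain k where k: "k < length d" "x = partner d (k + 1)"
      by (auto simp: in_set_conv_nth partner_def)
    then show "x \<in> {0..2*n}"
      using matching_partner(1)[of n d "k + 1"] D_imp_matching[OF d] by (auto simp: matching_length)
  qed (simp add: D_imp_matching matching_length)
qed (simp add: finite_lists_length_eq)

lemma length_lk [simp]: "length (lk k d) = length d + 2"
  by (simp add: lk_def)

lemma partner_lk: "1 \<le> x \<Longrightarrow> x \<le> length d + 2 \<Longrightarrow> partner (lk k d) x =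
   (if x = k then k + 1 else if x = k + 1 then k else shift k (partner d (unshift k x)))"
  by (simp add: lk_def partner_def nth_map_upt)

lemma partner_lk_arc:
  "1 \<le> k \<Longrightarrow> k \<le> length d + 1 \<Longrightarrow> partner (lk k d) k = k + 1 \<and> partner (lk k d) (k + 1) = k"
  by (simp add: partner_lk)

lemma partner_lk_shift:
  "1 \<le> x \<Longrightarrow> x \<le> length d \<Longrightarrow> partner (lk k d) (shift k x) = shift k (partner d x)"
proof -
  assume "1 \<le> x" "x \<le> length d"
  then have "1 \<le> shift k x" "shift k x \<le> length d + 2" by (auto simp: shift_def)
  then show ?thesis by (simp add: partner_lk)
qed

lemma matching_lk:
  assumes d: "matching n d" and k: "1 \<le> k" "k \<le> 2*n + 1"
  shows "matching (Suc n) (lk k d)"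
proof -
  have L: "length d = 2*n" using d by (rule matching_length)
  have "partner (lk k d) x \<in> {1..2 * Suc n} \<and> partner (lk k d) x \<noteq> x \<and>
        partner (lk k d) (partner (lk k d) x) = x" if x: "x \<in> {1..2 * Suc n}" for x
  proof (cases "x = k \<or> x = k + 1")
    case True
    then show ?thesis using k L partner_lk_arc[of k d] by auto
  next
    case False
    define u where "u = unshift k x"
    have u: "u \<in> {1..2*n}" using unshift_in_range[OF x] False k by (simp add: u_def)
    have x_eq: "x = shift k u" using False by (simp add: u_def shift_unshift)
    show ?thesis
      using matching_partner[OF d u] shift_in_range[of "partner d u" n k] partner_lk_shift[of _ d k] u L
      unfolding x_eq by auto
  qed
  then show ?thesis using L by (simp add: matching_def)
qed

lemma lk_in_D:
  assumes d: "d \<in> D n" and k: "1 \<le> k" "k \<le> 2*n + 1"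
  shows "lk k d \<in> D (Suc n)"
proof -
  have L: "length d = 2*n" using D_imp_matching[OF d] by (rule matching_length)
  have "\<not> (a < b \<and> b < partner (lk k d) a \<and> partner (lk k d) a < partner (lk k d) b)"
    if a: "a \<in> {1..2 * Suc n}" and b: "b \<in> {1..2 * Suc n}" for a b
  proof (cases "a \<in> {k, k + 1} \<or> b \<in> {k, k + 1}")
    case True
    then show ?thesis using a b L by (auto simp: partner_lk)
  next
    case False
    then have ua: "unshift k a \<in> {1..2*n}" and ub: "unshift k b \<in> {1..2*n}"
      using unshift_in_range a b k by auto
    have "a = shift k (unshift k a)" "b = shift k (unshift k b)" using False by (auto simp: shift_unshift)
    then show ?thesis
      using D_noncrossing[OF d ua ub] partner_lk_shift[of _ d k] ua ub L
      by (metis atLeastAtMost_iff shift_less_shift_iff)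
  qed
  then show ?thesis using matching_lk[OF D_imp_matching[OF d] k] by (simp add: in_D_iff)
qed

section \<open>Capping two adjacent points\<close>

definition cap_partner :: "nat \<Rightarrow> nat list \<Rightarrow> nat \<Rightarrow> nat" where
  "cap_partner k d z = (if partner d z = k then partner d (k + 1)
     else if partner d z = k + 1 then partner d k else partner d z)"

definition cap :: "nat \<Rightarrow> nat list \<Rightarrow> nat list" where
  "cap k d = map (\<lambda>j. unshift k (cap_partner k d (shift k j))) [1..<length d - 1]"

lemma length_cap [simp]: "length (cap k d) = length d - 2"
  by (simp add: cap_def)

lemma length_remarc [simp]: "length (remarc k d) = length d - 2"
  by (simp add: remarc_def)

lemma partner_cap:
  assumes "1 \<le> x" "x + 2 \<le> length d"
  shows "partner (cap k d) x = unshift k (cap_partner k d (shift k x))"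
proof -
  have "[1..<length d - 1] ! (x - 1) = x" using assms by (subst nth_upt) auto
  then show ?thesis using assms by (simp add: cap_def partner_def)
qed

context
  fixes n k :: nat and d :: "nat list"
  assumes d: "matching (Suc n) d" and k: "1 \<le> k" "k \<le> 2*n + 1"
begin

lemma cap_partner_in_range:
  assumes z: "z \<in> {1..2 * Suc n}" "z \<noteq> k" "z \<noteq> k + 1"
  shows "cap_partner k d z \<in> {1..2 * Suc n} - {k, k + 1}" "cap_partner k d z \<noteq> z"
    "cap_partner k d (cap_partner k d z) = z"
proof -
  have "k \<in> {1..2 * Suc n}" "k + 1 \<in> {1..2 * Suc n}" using k by auto
  note P = matching_partner[OF d this(1)] matching_partner[OF d this(2)] matching_partner[OF d z(1)]
  show "cap_partner k d z \<in> {1..2 * Suc n} - {k, k + 1}" "cap_partner k d z \<noteq> z"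
    "cap_partner k d (cap_partner k d z) = z"
    using P z by (auto simp: cap_partner_def)
qed

lemma shift_partner_cap:
  assumes x: "x \<in> {1..2*n}"
  shows "shift k (partner (cap k d) x) = cap_partner k d (shift k x)"
proof -
  have "cap_partner k d (shift k x) \<in> {1..2 * Suc n} - {k, k + 1}"
    using cap_partner_in_range shift_in_range[OF x] by simp
  then show ?thesis using x matching_length[OF d] by (simp add: partner_cap shift_unshift)
qed

lemma partner_cap_unshift:
  assumes w: "w \<in> {1..2 * Suc n}" "w \<noteq> k" "w \<noteq> k + 1"
  shows "partner (cap k d) (unshift k w) = unshift k (cap_partner k d w)"
  using shift_partner_cap[OF unshift_in_range[OF w k]] w
  by (metis shift_unshift unshift_shift)

lemma matching_cap: "matching n (cap k d)"
proof -
  have "partner (cap k d) x \<in> {1..2*n} \<and> partner (cap k d) x \<noteq> x \<and>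
        partner (cap k d) (partner (cap k d) x) = x" if x: "x \<in> {1..2*n}" for x
  proof -
    define w where "w = cap_partner k d (shift k x)"
    have sx: "shift k x \<in> {1..2 * Suc n}" "shift k x \<noteq> k" "shift k x \<noteq> k + 1"
      using shift_in_range[OF x] by auto
    note w = cap_partner_in_range[OF sx, folded w_def]
    have p: "partner (cap k d) x = unshift k w"
      using shift_partner_cap[OF x] by (metis unshift_shift w_def)
    have "partner (cap k d) (unshift k w) = x"
      using partner_cap_unshift[of w] w by (simp add: w_def)
    then show ?thesis using p w unshift_in_range[of w n k] k
      by (auto simp: w_def dest: arg_cong[of _ _ "shift k"] simp: shift_unshift)
  qed
  then show ?thesis using matching_length[OF d] by (simp add: matching_def)
qed

context
  assumes arc: "partner d k = k + 1"
begin

lemma cap_partner_arc: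
  assumes z: "z \<in> {1..2 * Suc n}" "z \<noteq> k" "z \<noteq> k + 1"
  shows "cap_partner k d z = partner d z"
proof -
  have "partner d (partner d z) = z" using matching_partner(3)[OF d z(1)] .
  then have "partner d z \<noteq> k" "partner d z \<noteq> k + 1"
    using matching_partner_eq_iff[OF d, of k "k + 1"] arc k z by auto
  then show ?thesis by (simp add: cap_partner_def)
qed

lemma remarc_eq_cap: "remarc k d = cap k d"
  unfolding remarc_def cap_def
proof (rule map_cong[OF refl])
  fix j assume "j \<in> set [1..<length d - 1]"
  then have "j \<in> {1..2*n}" using matching_length[OF d] by auto
  then show "unshift k (partner d (shift k j)) = unshift k (cap_partner k d (shift k j))"
    using cap_partner_arc[OF shift_in_range] by simp
qed

lemma shift_partner_remarc: "x \<in> {1..2*n} \<Longrightarrow> shift k (partner (remarc k d) x) = partner d (shift k x)"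
  using shift_partner_cap cap_partner_arc[OF shift_in_range] by (simp add: remarc_eq_cap)

lemma lk_remarc: "lk k (remarc k d) = d"
proof (rule partner_ext)
  have L: "length d = 2 * Suc n" using d by (rule matching_length)
  then show "length (lk k (remarc k d)) = length d" by simp
  fix x assume x: "1 \<le> x" "x \<le> length (lk k (remarc k d))"
  then have x': "x \<in> {1..2 * Suc n}" using L by simp
  show "partner (lk k (remarc k d)) x = partner d x"
  proof (cases "x = k \<or> x = k + 1")
    case True
    then show ?thesis
      using partner_lk_arc[of k "remarc k d"] matching_partner_eq_iff[OF d, of k "k + 1"] arc k L
      by auto
  next
    case False
    have u: "unshift k x \<in> {1..2*n}" using unshift_in_range[OF x'] False k by simp
    have "partner (lk k (remarc k d)) x = shift k (partner (remarc k d) (unshift k x))"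
      using x False L by (simp add: partner_lk)
    also have "\<dots> = partner d x" using shift_partner_remarc[OF u] False by (simp add: shift_unshift)
    finally show ?thesis .
  qed
qed

end

end

lemma remarc_in_D:
  assumes d: "d \<in> D (Suc n)" and k: "1 \<le> k" "k \<le> 2*n + 1" and arc: "partner d k = k + 1"
  shows "remarc k d \<in> D n"
proof -
  note pr = shift_partner_remarc[OF D_imp_matching[OF d] k arc]
  have "\<not> (a < b \<and> b < partner (remarc k d) a \<and> partner (remarc k d) a < partner (remarc k d) b)"
    if a: "a \<in> {1..2*n}" and b: "b \<in> {1..2*n}" for a b
    using D_noncrossing[OF d shift_in_range[OF a] shift_in_range[OF b]] pr[OF a] pr[OF b]
    by (metis shift_less_shift_iff)
  then show ?thesis
    using matching_cap[OF D_imp_matching[OF d] k] remarc_eq_cap[OF D_imp_matching[OF d] k arc]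
    by (simp add: in_D_iff)
qed

section \<open>Counting loops\<close>

definition glue_rel :: "nat list \<Rightarrow> nat list \<Rightarrow> (nat \<times> nat) set" where
  "glue_rel a b = {(i, partner a i) | i. i \<in> {1..length a}} \<union> {(i, partner b i) | i. i \<in> {1..length a}}"

lemma glue_rel_iff: "(x, y) \<in> glue_rel a b \<longleftrightarrow> x \<in> {1..length a} \<and> (y = partner a x \<or> y = partner b x)"
  by (auto simp: glue_rel_def)

lemma loops_eq_card_classes: "loops a b = card ((\<lambda>x. (glue_rel a b)\<^sup>* `` {x}) ` {1..length a})"
proof -
  have "A // r = (\<lambda>x. r `` {x}) ` A" for A :: "nat set" and r by (auto simp: quotient_def)
  then show ?thesis by (simp add: loops_def glue_rel_def)
qed

lemma sym_glue_rel:
  assumes "matching n a" "matching n b" shows "sym (glue_rel a b)"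
  using matching_partner[OF assms(1)] matching_partner[OF assms(2)]
  by (auto simp: sym_def glue_rel_iff matching_length[OF assms(1)])

lemma rtrancl_Image_eq_iff: "sym r \<Longrightarrow> r\<^sup>* `` {x} = r\<^sup>* `` {y} \<longleftrightarrow> (x, y) \<in> r\<^sup>*"
  using eq_equiv_class_iff[of UNIV "r\<^sup>*" x y]
  by (simp add: equiv_def refl_rtrancl sym_rtrancl trans_rtrancl)

lemma rtrancl_map:
  assumes "\<And>a b. (a, b) \<in> r \<Longrightarrow> (f a, f b) \<in> s\<^sup>*"
  shows "(x, y) \<in> r\<^sup>* \<Longrightarrow> (f x, f y) \<in> s\<^sup>*"
  by (induction rule: rtrancl_induct) (auto intro: rtrancl_trans assms)

lemma card_image_eq_if_same_kernel:
  assumes "\<And>x y. x \<in> B \<Longrightarrow> y \<in> B \<Longrightarrow> g x = g y \<longleftrightarrow> h x = h y"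
  shows "card (g ` B) = card (h ` B)"
proof (rule bij_betw_same_card)
  show "bij_betw (\<lambda>u. h (inv_into B g u)) (g ` B) (h ` B)"
  proof (rule bij_betw_imageI)
    have *: "h (inv_into B g (g x)) = h x" if "x \<in> B" for x
      using assms[of "inv_into B g (g x)" x] that by (simp add: inv_into_into f_inv_into_f)
    show "inj_on (\<lambda>u. h (inv_into B g u)) (g ` B)"
      by (auto intro!: inj_onI simp: * assms)
    show "(\<lambda>u. h (inv_into B g u)) ` g ` B = h ` B"
      by (auto simp: image_image * intro: image_eqI)
  qed
qed

text \<open>A left inverse of \<open>shift k\<close> that maps the loops of d glued to \<open>lk k \<alpha>\<close> onto those of
  \<open>cap k d\<close> glued to \<open>\<alpha>\<close>.\<close>
definition cap_proj :: "nat \<Rightarrow> nat list \<Rightarrow> nat \<Rightarrow> nat" where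
  "cap_proj k d z = unshift k (if z = k \<or> z = k + 1 then partner d k else z)"

context
  fixes n k :: nat and \<beta> \<alpha> :: "nat list"
  assumes \<beta>: "matching (Suc n) \<beta>" and \<alpha>: "matching n \<alpha>" and k: "1 \<le> k" "k \<le> 2*n + 1"
begin

lemma glue_cap_imp_glue_lk:
  assumes "(x, y) \<in> glue_rel (cap k \<beta>) \<alpha>"
  shows "(shift k x, shift k y) \<in> (glue_rel \<beta> (lk k \<alpha>))\<^sup>*"
proof -
  let ?R = "glue_rel \<beta> (lk k \<alpha>)"
  have x: "x \<in> {1..2*n}" and y: "y = partner (cap k \<beta>) x \<or> y = partner \<alpha> x"
    using assms matching_length[OF \<beta>] by (auto simp: glue_rel_iff)
  have Lb: "length \<beta> = 2 * Suc n" and La: "length \<alpha> = 2 * n"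
    using \<beta> \<alpha> by (simp_all add: matching_length)
  have sx: "shift k x \<in> {1..2 * Suc n}" using shift_in_range[OF x] .
  have arc: "(k, k + 1) \<in> ?R" "(k + 1, k) \<in> ?R"
    using partner_lk_arc[of k \<alpha>] k Lb La by (auto simp: glue_rel_iff)
  have \<beta>_step: "(z, partner \<beta> z) \<in> ?R" if "z \<in> {1..2 * Suc n}" for z
    using that Lb by (simp add: glue_rel_iff)
  from y show ?thesis
  proof
    assume "y = partner \<alpha> x"
    then have "shift k y = partner (lk k \<alpha>) (shift k x)" using x La by (simp add: partner_lk_shift)
    then show ?thesis using sx Lb by (auto simp: glue_rel_iff)
  next
    assume "y = partner (cap k \<beta>) x"
    then have sy: "shift k y = cap_partner k \<beta> (shift k x)"
      using shift_partner_cap[OF \<beta> k x] by simp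
    have k_in: "k \<in> {1..2 * Suc n}" "k + 1 \<in> {1..2 * Suc n}" using k by auto
    consider "partner \<beta> (shift k x) = k" | "partner \<beta> (shift k x) = k + 1"
      | "partner \<beta> (shift k x) \<noteq> k" "partner \<beta> (shift k x) \<noteq> k + 1" by blast
    then show ?thesis
    proof cases
      case 1
      then show ?thesis using sy \<beta>_step[OF sx] arc \<beta>_step[OF k_in(2)]
        by (simp add: cap_partner_def)
    next
      case 2
      then show ?thesis using sy \<beta>_step[OF sx] arc \<beta>_step[OF k_in(1)]
        by (simp add: cap_partner_def)
    next
      case 3
      then show ?thesis using sy \<beta>_step[OF sx] by (simp add: cap_partner_def)
    qed
  qed
qed

lemma glue_rel_cap_unshift:
  assumes w: "w \<in> {1..2 * Suc n}" "w \<noteq> k" "w \<noteq> k + 1"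
  shows "(unshift k w, unshift k (cap_partner k \<beta> w)) \<in> glue_rel (cap k \<beta>) \<alpha>"
    and "(unshift k w, unshift k (partner (lk k \<alpha>) w)) \<in> glue_rel (cap k \<beta>) \<alpha>"
proof -
  have u: "unshift k w \<in> {1..2*n}" using unshift_in_range[OF w k] .
  have "length (cap k \<beta>) = 2 * n" using matching_length[OF \<beta>] by simp
  moreover have "partner (lk k \<alpha>) w = shift k (partner \<alpha> (unshift k w))"
    using partner_lk_shift[of "unshift k w" \<alpha> k] u matching_length[OF \<alpha>] w by (simp add: shift_unshift)
  ultimately show "(unshift k w, unshift k (cap_partner k \<beta> w)) \<in> glue_rel (cap k \<beta>) \<alpha>"
    and "(unshift k w, unshift k (partner (lk k \<alpha>) w)) \<in> glue_rel (cap k \<beta>) \<alpha>"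
    using partner_cap_unshift[OF \<beta> k w] u by (simp_all add: glue_rel_iff)
qed

lemma glue_lk_imp_glue_cap:
  assumes "(x, y) \<in> glue_rel \<beta> (lk k \<alpha>)"
  shows "(cap_proj k \<beta> x, cap_proj k \<beta> y) \<in> (glue_rel (cap k \<beta>) \<alpha>)\<^sup>*"
proof -
  have x: "x \<in> {1..2 * Suc n}" and y: "y = partner \<beta> x \<or> y = partner (lk k \<alpha>) x"
    using assms matching_length[OF \<beta>] by (auto simp: glue_rel_iff)
  have k_in: "k \<in> {1..2 * Suc n}" "k + 1 \<in> {1..2 * Suc n}" using k by auto
  have proj_off: "cap_proj k \<beta> z = unshift k z" if "z \<noteq> k" "z \<noteq> k + 1" for z
    using that by (simp add: cap_proj_def)
  have proj_arc: "cap_proj k \<beta> k = unshift k (partner \<beta> k)" "cap_proj k \<beta> (k + 1) = unshift k (partner \<beta> k)"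
    by (simp_all add: cap_proj_def)
  note Pk = matching_partner[OF \<beta> k_in(1)] and Px = matching_partner[OF \<beta> x]
  consider (arc) "x \<in> {k, k + 1}" "y \<in> {k, k + 1}" | (leave_arc) "x \<in> {k, k + 1}" "y \<notin> {k, k + 1}"
    | (lk) "x \<notin> {k, k + 1}" "y = partner (lk k \<alpha>) x" | (\<beta>) "x \<notin> {k, k + 1}" "y = partner \<beta> x"
    using y by blast
  then show ?thesis
  proof cases
    case arc
    then show ?thesis using proj_arc by auto
  next
    case leave_arc
    then have y: "y = partner \<beta> x" using y partner_lk_arc[of k \<alpha>] k matching_length[OF \<alpha>] by auto
    show ?thesis
    proof (cases "x = k")
      case True
      then show ?thesis using y leave_arc proj_arc proj_off by simp
    next
      case False
      then have "x = k + 1" using leave_arc by simp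
      moreover have "partner \<beta> k \<noteq> k + 1"
        using matching_partner_eq_iff[OF \<beta> k_in] y leave_arc \<open>x = k + 1\<close> by auto
      moreover have "cap_partner k \<beta> (partner \<beta> k) = partner \<beta> (k + 1)"
        using Pk by (simp add: cap_partner_def)
      ultimately show ?thesis
        using glue_rel_cap_unshift(1)[of "partner \<beta> k"] Pk y leave_arc proj_arc proj_off by auto
    qed
  next
    case lk
    then have "y = shift k (partner \<alpha> (unshift k x))"
      using x matching_length[OF \<alpha>] by (simp add: partner_lk)
    then show ?thesis using glue_rel_cap_unshift(2)[OF x] lk proj_off by auto
  next
    case \<beta>
    consider "y = k" | "y = k + 1" | "y \<noteq> k" "y \<noteq> k + 1" by blast
    then show ?thesis
    proof cases
      case 1
      then show ?thesis using \<beta> Px proj_arc proj_off by simp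
    next
      case 2
      then have "cap_partner k \<beta> x = partner \<beta> k" using \<beta> by (simp add: cap_partner_def)
      then show ?thesis using glue_rel_cap_unshift(1)[OF x] \<beta> 2 proj_arc proj_off by simp
    next
      case 3
      then have "cap_partner k \<beta> x = y" using \<beta> by (simp add: cap_partner_def)
      then show ?thesis using glue_rel_cap_unshift(1)[OF x] \<beta> 3 proj_off by simp
    qed
  qed
qed

lemma glue_lk_shift_iff:
  "(shift k x, shift k y) \<in> (glue_rel \<beta> (lk k \<alpha>))\<^sup>* \<longleftrightarrow> (x, y) \<in> (glue_rel (cap k \<beta>) \<alpha>)\<^sup>*"
proof
  have proj_shift: "cap_proj k \<beta> (shift k z) = z" for z by (simp add: cap_proj_def)
  show "(shift k x, shift k y) \<in> (glue_rel \<beta> (lk k \<alpha>))\<^sup>* \<Longrightarrow> (x, y) \<in> (glue_rel (cap k \<beta>) \<alpha>)\<^sup>*"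
    using rtrancl_map[where f = "cap_proj k \<beta>", OF glue_lk_imp_glue_cap] by (metis proj_shift)
qed (rule rtrancl_map[OF glue_cap_imp_glue_lk])

lemma loops_lk: "loops \<beta> (lk k \<alpha>) = loops (cap k \<beta>) \<alpha> + (if partner \<beta> k = k + 1 then 1 else 0)"
proof -
  let ?R = "glue_rel \<beta> (lk k \<alpha>)" and ?A = "{1..2 * Suc n}"
  define cls where "cls a = ?R\<^sup>* `` {a}" for a
  have Lb: "length \<beta> = 2 * Suc n" and La: "length \<alpha> = 2 * n"
    using \<beta> \<alpha> by (simp_all add: matching_length)
  have sym: "sym ?R" by (rule sym_glue_rel[OF \<beta> matching_lk[OF \<alpha> k]])
  have k_in: "k \<in> ?A" "k + 1 \<in> ?A" using k by auto
  have k_step: "(k, k + 1) \<in> ?R" using partner_lk_arc[of k \<alpha>] k Lb La by (simp add: glue_rel_iff)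
  have "loops (cap k \<beta>) \<alpha> = card ((\<lambda>b. (glue_rel (cap k \<beta>) \<alpha>)\<^sup>* `` {b}) ` {1..2*n})"
    using Lb by (simp add: loops_eq_card_classes)
  also have "\<dots> = card ((\<lambda>b. cls (shift k b)) ` {1..2*n})"
    using rtrancl_Image_eq_iff[OF sym] rtrancl_Image_eq_iff[OF sym_glue_rel[OF matching_cap[OF \<beta> k] \<alpha>]]
    by (intro card_image_eq_if_same_kernel) (simp add: cls_def glue_lk_shift_iff)
  also have "\<dots> = card (cls ` (?A - {k, k + 1}))"
    using shift_image[OF k] by (metis image_image)
  finally have cap_loops: "loops (cap k \<beta>) \<alpha> = card (cls ` (?A - {k, k + 1}))" .
  have "cls (k + 1) = cls k"
    using k_step rtrancl_Image_eq_iff[OF sym] by (auto simp: cls_def)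
  then have "cls ` ?A = insert (cls k) (cls ` (?A - {k, k + 1}))"
    using k_in by auto
  then have lk_loops: "loops \<beta> (lk k \<alpha>) = card (insert (cls k) (cls ` (?A - {k, k + 1})))"
    using Lb by (simp add: loops_eq_card_classes cls_def)
  show ?thesis
  proof (cases "partner \<beta> k = k + 1")
    case True
    have "?R `` {k, k + 1} \<subseteq> {k, k + 1}"
      using True matching_partner_eq_iff[OF \<beta> k_in] partner_lk_arc[of k \<alpha>] k Lb La
      by (auto simp: glue_rel_iff)
    then have "cls k \<subseteq> {k, k + 1}"
      using Image_closed_trancl[of ?R "{k, k + 1}"] by (auto simp: cls_def)
    then have "cls k \<notin> cls ` (?A - {k, k + 1})" by (auto simp: cls_def)
    then show ?thesis using True lk_loops cap_loops by simp
  next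
    case False
    have "partner \<beta> k \<in> ?A - {k, k + 1}" using matching_partner[OF \<beta> k_in(1)] False by simp
    moreover have "cls k = cls (partner \<beta> k)"
      using k_in Lb rtrancl_Image_eq_iff[OF sym] by (auto simp: cls_def glue_rel_iff)
    ultimately have "cls k \<in> cls ` (?A - {k, k + 1})" by simp
    then show ?thesis using False lk_loops cap_loops by (simp add: insert_absorb)
  qed
qed

end

section \<open>The Markov form against a single diagram\<close>

definition markov_diag :: "nat \<Rightarrow> nat list \<Rightarrow> vec \<Rightarrow> qf" where
  "markov_diag n \<beta> w = (\<Sum>\<alpha>\<in>D n. w \<alpha> * qq ^ loops \<beta> \<alpha>)"

lemma markov_ind:
  assumes "\<beta> \<in> D n" shows "markov n (ind \<beta>) w = markov_diag n \<beta> w"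
proof -
  have "markov n (ind \<beta>) w = (\<Sum>\<alpha>\<in>D n. if \<alpha> = \<beta> then markov_diag n \<beta> w else 0)"
    unfolding markov_def markov_diag_def ind_def by (intro sum.cong) auto
  then show ?thesis using assms by (simp add: finite_D)
qed

lemma markov_diag_diff: "markov_diag n \<beta> (\<lambda>x. f x - c * g x) = markov_diag n \<beta> f - c * markov_diag n \<beta> g"
  by (simp add: markov_diag_def sum_subtractf sum_distrib_left algebra_simps)

lemma markov_diag_Lk:
  assumes \<beta>: "matching (Suc n) \<beta>" and k: "1 \<le> k" "k \<le> 2*n + 1"
  shows "markov_diag (Suc n) \<beta> (Lk k v) =
    (if partner \<beta> k = k + 1 then qq else 1) * markov_diag n (cap k \<beta>) v"
proof -
  let ?h = "\<lambda>\<alpha>. v \<alpha> * qq ^ loops \<beta> (lk k \<alpha>)"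
  have "markov_diag (Suc n) \<beta> (Lk k v) = (\<Sum>\<gamma>\<in>D (Suc n). sum ?h {\<alpha> \<in> D n. lk k \<alpha> = \<gamma>})"
    unfolding markov_diag_def Lk_def
  proof (intro sum.cong refl)
    fix \<gamma> assume "\<gamma> \<in> D (Suc n)"
    then have "length \<gamma> div 2 - 1 = n" using matching_length[OF D_imp_matching] by simp
    then show "(\<Sum>\<alpha>\<in>{\<alpha> \<in> D (length \<gamma> div 2 - 1). lk k \<alpha> = \<gamma>}. v \<alpha>) * qq ^ loops \<beta> \<gamma>
      = sum ?h {\<alpha> \<in> D n. lk k \<alpha> = \<gamma>}"
      by (simp add: sum_distrib_right)
  qed
  also have "\<dots> = sum ?h (D n)"
    using lk_in_D k by (intro sum.group finite_D) auto
  also have "\<dots> = (if partner \<beta> k = k + 1 then qq else 1) * markov_diag n (cap k \<beta>) v"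
    unfolding markov_diag_def sum_distrib_left
    by (intro sum.cong refl) (simp add: loops_lk[OF \<beta> D_imp_matching k] power_add)
  finally show ?thesis .
qed

lemma markov_diag_epa_Suc: "markov_diag n \<beta> (epa v (Suc a)) = (if a = 0 then markov_diag n \<beta> (Lk 1 v)
    else markov_diag n \<beta> (Lk (Suc a) v) - Delta (a - 1) / Delta a * markov_diag n \<beta> (epa v a))"
proof (cases "a = 0")
  case False
  then have "epa v (Suc a) = (\<lambda>x. Lk (Suc a) v x - Delta (a - 1) / Delta a * epa v a x)" by simp
  then show ?thesis
    using False markov_diag_diff[of n \<beta> "Lk (Suc a) v" "Delta (a - 1) / Delta a" "epa v a"] by simp
qed simp

lemma markov_diag_epa_0 [simp]: "markov_diag n \<beta> (epa v 0) = 0"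
  by (simp add: markov_diag_def)

declare epa.simps [simp del]

section \<open>The polynomials \<open>\<Delta>\<^sub>k\<close> do not vanish\<close>

fun Delta_poly :: "nat \<Rightarrow> rat poly" where
  "Delta_poly 0 = 1"
| "Delta_poly (Suc 0) = [:0, 1:]"
| "Delta_poly (Suc (Suc k)) = [:0, 1:] * Delta_poly (Suc k) - Delta_poly k"

lemma Delta_eq_Fract: "Delta k = Fract (Delta_poly k) 1"
  by (induction k rule: Delta_poly.induct) (simp_all add: qq_def One_fract_def)

lemma poly_Delta_poly_2: "poly (Delta_poly k) 2 = of_nat (k + 1)"
  by (induction k rule: Delta_poly.induct) (simp_all add: algebra_simps)

lemma Delta_nonzero: "Delta k \<noteq> 0"
proof -
  have "Delta_poly k \<noteq> 0" using poly_Delta_poly_2[of k] by auto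
  then show ?thesis by (simp add: Delta_eq_Fract Zero_fract_def eq_fract)
qed

lemma qq_nonzero: "qq \<noteq> 0"
  using Delta_nonzero[of 1] by simp

lemma Delta_recurrence_cancel: "Delta (Suc l) / Delta (Suc (Suc l)) * (qq * X - Delta l / Delta (Suc l) * X) = X"
proof -
  have "Delta (Suc l) * (qq * X - Delta l / Delta (Suc l) * X) = Delta (Suc (Suc l)) * X"
    using Delta_nonzero[of "Suc l"] by (simp add: field_simps)
  then show ?thesis
    using Delta_nonzero[of "Suc (Suc l)"] by (metis nonzero_mult_div_cancel_left times_divide_eq_left)
qed

section \<open>Orthogonality of \<open>e'\<close> to matchings with an early arc\<close>

context
  fixes n m :: nat and \<beta> :: "nat list"
  assumes \<beta>: "matching (Suc n) \<beta>" and m: "1 \<le> m" "m \<le> 2*n + 1" and arc: "partner \<beta> m = m + 1"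
begin

lemma partner_arc_Suc: "partner \<beta> (m + 1) = m"
  using matching_partner_eq_iff[OF \<beta>, of m "m + 1"] arc m by simp

lemma partner_off_arc:
  assumes "z \<in> {1..2 * Suc n}" "z \<noteq> m" "z \<noteq> m + 1"
  shows "partner \<beta> z \<noteq> m" "partner \<beta> z \<noteq> m + 1"
  using matching_partner_eq_iff[OF \<beta> assms(1)] assms arc partner_arc_Suc m by auto

lemma partner_cap_left_of_arc:
  assumes "1 \<le> i" "i + 2 \<le> m"
  shows "partner (cap i \<beta>) (m - 2) = m - 1"
proof -
  have "shift i (m - 2) = m" "unshift i (m + 1) = m - 1" using assms by (auto simp: shift_def unshift_def)
  moreover have "cap_partner i \<beta> m = m + 1" using assms arc by (auto simp: cap_partner_def)
  ultimately show ?thesis using assms m matching_length[OF \<beta>] by (simp add: partner_cap)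
qed

lemma partner_cap_right_of_arc:
  assumes "m + 2 \<le> i" "i \<le> 2*n + 1"
  shows "partner (cap i \<beta>) m = m + 1"
proof -
  have "shift i m = m" "unshift i (m + 1) = m + 1" using assms by (auto simp: shift_def unshift_def)
  moreover have "cap_partner i \<beta> m = m + 1" using assms arc by (auto simp: cap_partner_def)
  ultimately show ?thesis using assms m matching_length[OF \<beta>] by (simp add: partner_cap)
qed

lemma cap_pred_eq_cap_at_arc:
  assumes "2 \<le> m"
  shows "cap (m - 1) \<beta> = cap m \<beta>"
proof (rule partner_ext)
  fix x assume "1 \<le> x" "x \<le> length (cap (m - 1) \<beta>)"
  then have x: "1 \<le> x" "x + 2 \<le> length \<beta>" by auto
  show "partner (cap (m - 1) \<beta>) x = partner (cap m \<beta>) x"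
  proof (cases "x = m - 1")
    case True
    have "m - 1 \<in> {1..2 * Suc n}" using assms m by auto
    note p = partner_off_arc[OF this] matching_partner(2)[OF \<beta> this]
    have "shift (m - 1) x = m + 1" "shift m x = m - 1" using True assms by (auto simp: shift_def)
    then show ?thesis
      using x p assms arc partner_arc_Suc by (auto simp: partner_cap cap_partner_def unshift_def)
  next
    case False
    have "shift m x \<in> {1..2 * Suc n}" "shift m x \<noteq> m" "shift m x \<noteq> m + 1"
      using shift_in_range[of x n m] x matching_length[OF \<beta>] by auto
    note p = partner_off_arc[OF this]
    have "shift (m - 1) x = shift m x" "shift m x \<noteq> m - 1" using False assms by (auto simp: shift_def)
    then show ?thesis
      using x p assms arc partner_arc_Suc by (auto simp: partner_cap cap_partner_def unshift_def)
  qed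
qed simp

lemma cap_Suc_eq_cap_at_arc:
  assumes "m \<le> 2*n"
  shows "cap (m + 1) \<beta> = cap m \<beta>"
proof (rule partner_ext)
  fix x assume "1 \<le> x" "x \<le> length (cap (m + 1) \<beta>)"
  then have x: "1 \<le> x" "x + 2 \<le> length \<beta>" by auto
  show "partner (cap (m + 1) \<beta>) x = partner (cap m \<beta>) x"
  proof (cases "x = m")
    case True
    have "m + 2 \<in> {1..2 * Suc n}" using assms by auto
    note p = partner_off_arc[OF this] matching_partner(2)[OF \<beta> this]
    have "shift (m + 1) x = m" "shift m x = m + 2" using True by (auto simp: shift_def)
    then show ?thesis
      using x p arc partner_arc_Suc by (auto simp: partner_cap cap_partner_def unshift_def)
  next
    case False
    have "shift m x \<in> {1..2 * Suc n}" "shift m x \<noteq> m" "shift m x \<noteq> m + 1"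
      using shift_in_range[of x n m] x matching_length[OF \<beta>] by auto
    note p = partner_off_arc[OF this]
    have "shift (m + 1) x = shift m x" "shift m x \<noteq> m + 2" using False by (auto simp: shift_def)
    then show ?thesis
      using x p arc partner_arc_Suc by (auto simp: partner_cap cap_partner_def unshift_def)
  qed
qed simp

end

definition orthogonal_to_arcs_below :: "nat \<Rightarrow> nat \<Rightarrow> vec \<Rightarrow> bool" where
  "orthogonal_to_arcs_below n h v \<longleftrightarrow>
     (\<forall>\<beta> m. matching n \<beta> \<longrightarrow> 1 \<le> m \<longrightarrow> m < h \<longrightarrow> partner \<beta> m = m + 1 \<longrightarrow> markov_diag n \<beta> v = 0)"

lemma orthogonal_to_arcs_belowD:
  "orthogonal_to_arcs_below n h v \<Longrightarrow> matching n \<beta> \<Longrightarrow> 1 \<le> m \<Longrightarrow> m < h \<Longrightarrow> partner \<beta> m = m + 1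
    \<Longrightarrow> markov_diag n \<beta> v = 0"
  by (simp add: orthogonal_to_arcs_below_def)

context
  fixes n h m :: nat and \<beta> :: "nat list" and v :: vec
  assumes v: "orthogonal_to_arcs_below n h v" and \<beta>: "matching (Suc n) \<beta>"
    and m: "1 \<le> m" "m \<le> 2*n + 1" and arc: "partner \<beta> m = m + 1"
begin

lemma markov_diag_epa_left_of_arc:
  assumes "m < h + 2"
  shows "i + 2 \<le> m \<Longrightarrow> markov_diag (Suc n) \<beta> (epa v i) = 0"
proof (induction i)
  case (Suc i)
  have i: "1 \<le> Suc i" "Suc i \<le> 2*n + 1" using Suc.prems m by auto
  have "markov_diag n (cap (Suc i) \<beta>) v = 0"
    using orthogonal_to_arcs_belowD[OF v matching_cap[OF \<beta> i], of "m - 2"]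
      partner_cap_left_of_arc[OF \<beta> m arc, of "Suc i"] Suc.prems assms by simp
  then have "markov_diag (Suc n) \<beta> (Lk (Suc i) v) = 0" using markov_diag_Lk[OF \<beta> i] by simp
  then show ?case using Suc by (auto simp: markov_diag_epa_Suc)
qed simp

lemma markov_diag_epa_at_arc:
  assumes "m \<le> h" "h \<le> n"
  shows "markov_diag (Suc n) \<beta> (epa v (m + 1)) = 0"
proof -
  define X where "X = markov_diag n (cap m \<beta>) v"
  have Lk_at: "markov_diag (Suc n) \<beta> (Lk m v) = qq * X"
    using markov_diag_Lk[OF \<beta> m] arc by (simp add: X_def)
  have Lk_right: "markov_diag (Suc n) \<beta> (Lk (m + 1) v) = X"
    using markov_diag_Lk[OF \<beta>, of "m + 1"] partner_arc_Suc[OF \<beta> m arc]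
      cap_Suc_eq_cap_at_arc[OF \<beta> m arc] assms by (simp add: X_def)
  show ?thesis
  proof (cases "m = 1")
    case True
    then show ?thesis using Lk_at Lk_right qq_nonzero by (simp add: markov_diag_epa_Suc)
  next
    case False
    then have "2 \<le> m" using m by simp
    then obtain l where l: "m = Suc (Suc l)" by (metis add_2_eq_Suc le_Suc_ex)
    have "partner \<beta> (m - 1) \<noteq> m"
      using matching_partner_eq_iff[OF \<beta>, of "m - 1" m] arc m l by auto
    then have Lk_left: "markov_diag (Suc n) \<beta> (Lk (Suc l) v) = X"
      using markov_diag_Lk[OF \<beta>, of "m - 1"] cap_pred_eq_cap_at_arc[OF \<beta> m arc] m l
      by (simp add: X_def)
    have "markov_diag (Suc n) \<beta> (epa v l) = 0"
      using markov_diag_epa_left_of_arc l assms by simp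
    then have "markov_diag (Suc n) \<beta> (epa v (Suc l)) = X"
      using Lk_left by (auto simp: markov_diag_epa_Suc)
    then have "markov_diag (Suc n) \<beta> (epa v m) = qq * X - Delta l / Delta (Suc l) * X"
      using Lk_at l by (simp add: markov_diag_epa_Suc)
    then have "markov_diag (Suc n) \<beta> (epa v (m + 1)) =
      X - Delta (Suc l) / Delta (Suc (Suc l)) * (qq * X - Delta l / Delta (Suc l) * X)"
      using Lk_right l by (simp add: markov_diag_epa_Suc)
    also have "\<dots> = 0" by (simp only: Delta_recurrence_cancel diff_self)
    finally show ?thesis .
  qed
qed

lemma markov_diag_epa_right_of_arc:
  assumes "h \<le> n"
  shows "m + 1 \<le> i \<Longrightarrow> i \<le> h + 1 \<Longrightarrow> markov_diag (Suc n) \<beta> (epa v i) = 0"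
proof (induction i rule: dec_induct)
  case base
  then show ?case using markov_diag_epa_at_arc assms by simp
next
  case (step l)
  have l: "1 \<le> Suc l" "Suc l \<le> 2*n + 1" using step assms by auto
  have "markov_diag n (cap (Suc l) \<beta>) v = 0"
    using orthogonal_to_arcs_belowD[OF v matching_cap[OF \<beta> l] m(1)]
      partner_cap_right_of_arc[OF \<beta> m arc, of "Suc l"] step l by simp
  then have "markov_diag (Suc n) \<beta> (Lk (Suc l) v) = 0" using markov_diag_Lk[OF \<beta> l] by simp
  moreover have "l \<noteq> 0" using step m by simp
  ultimately show ?case using step by (simp add: markov_diag_epa_Suc)
qed

end

lemma orthogonal_epa:
  assumes v: "orthogonal_to_arcs_below n h v" and h: "h \<le> n" and k: "k \<le> h + 1"
  shows "orthogonal_to_arcs_below (Suc n) k (epa v k)"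
  unfolding orthogonal_to_arcs_below_def
proof (intro allI impI)
  fix \<beta> m assume \<beta>: "matching (Suc n) \<beta>" and m: "1 \<le> m" "m < k" and arc: "partner \<beta> m = m + 1"
  show "markov_diag (Suc n) \<beta> (epa v k) = 0"
    using markov_diag_epa_right_of_arc[OF v \<beta> _ _ arc h] m h k by simp
qed

fun restricted_seq :: "nat list \<Rightarrow> bool" where
  "restricted_seq [] = False"
| "restricted_seq [k] = (k = 1)"
| "restricted_seq (k # k' # s) = (k \<le> k' + 1 \<and> restricted_seq (k' # s))"

lemma hd_le_length_restricted_seq: "restricted_seq s \<Longrightarrow> hd s \<le> length s"
  by (induction s rule: restricted_seq.induct) auto

theorem orthogonal_ep: "restricted_seq s \<Longrightarrow> orthogonal_to_arcs_below (length s) (hd s) (ep s)"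
proof (induction s rule: restricted_seq.induct)
  case (3 k k' s)
  then show ?case
    using orthogonal_epa[of "length (k' # s)" k' "ep (k' # s)" k] hd_le_length_restricted_seq[of "k' # s"]
    by simp
qed (auto simp: orthogonal_to_arcs_below_def)

section \<open>Restricted sequences\<close>

lemma exists_arc_inside:
  assumes d: "d \<in> D n"
  shows "a \<in> {1..2*n} \<Longrightarrow> a < partner d a \<Longrightarrow> \<exists>k. a \<le> k \<and> k + 1 \<le> partner d a \<and> partner d k = k + 1"
proof (induction "partner d a - a" arbitrary: a rule: less_induct)
  case less
  note Pa = matching_partner[OF D_imp_matching[OF d] less.prems(1)]
  show ?case
  proof (cases "partner d a = a + 1")
    case False
    have b: "a + 1 \<in> {1..2*n}" using False less.prems Pa by auto
    note Pb = matching_partner[OF D_imp_matching[OF d] b]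
    have "partner d (a + 1) \<noteq> a" "partner d (a + 1) \<noteq> partner d a"
      using Pb(3) Pa(3) False by auto
    moreover have "\<not> partner d (a + 1) < a"
      using D_noncrossing[OF d Pb(1) less.prems(1)] Pb(3) False less.prems(2) by auto
    moreover have "\<not> partner d a < partner d (a + 1)"
      using D_noncrossing[OF d less.prems(1) b] False less.prems(2) by auto
    ultimately have inside: "a + 1 < partner d (a + 1)" "partner d (a + 1) < partner d a"
      using Pb(2) by auto
    moreover have "partner d (a + 1) - (a + 1) < partner d a - a" using inside by auto
    ultimately obtain k where "a + 1 \<le> k" "k + 1 \<le> partner d (a + 1)" "partner d k = k + 1"
      using less.hyps[OF _ b] by blast
    then show ?thesis using inside by (intro exI[of _ k]) auto
  qed auto
qed

definition first_arc :: "nat list \<Rightarrow> nat" where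
  "first_arc d = (LEAST k. 1 \<le> k \<and> partner d k = k + 1)"

lemma first_arc:
  assumes d: "d \<in> D (Suc n)"
  shows "1 \<le> first_arc d" "first_arc d \<le> 2*n + 1" "partner d (first_arc d) = first_arc d + 1"
proof -
  have one: "1 \<in> {1..2 * Suc n}" by simp
  note P1 = matching_partner[OF D_imp_matching[OF d] one]
  obtain k where k: "1 \<le> k" "k + 1 \<le> partner d 1" "partner d k = k + 1"
    using exists_arc_inside[OF d one] P1 by force
  have "1 \<le> first_arc d \<and> partner d (first_arc d) = first_arc d + 1"
    unfolding first_arc_def by (rule LeastI[of _ k]) (use k in auto)
  then show "1 \<le> first_arc d" "partner d (first_arc d) = first_arc d + 1" by auto
  have "first_arc d \<le> k" unfolding first_arc_def by (rule Least_le) (use k in auto)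
  then show "first_arc d \<le> 2*n + 1" using k P1 by auto
qed

lemma no_arc_before_first_arc: "1 \<le> k \<Longrightarrow> k < first_arc d \<Longrightarrow> partner d k \<noteq> k + 1"
  unfolding first_arc_def using not_less_Least by blast

lemma rseq_aux_Suc: "rseq_aux (Suc m) d = first_arc d # rseq_aux m (remarc (first_arc d) d)"
  by (simp add: first_arc_def Let_def)

declare rseq_aux.simps(2) [simp del]

lemma length_rseq_aux [simp]: "length (rseq_aux m d) = m"
  by (induction m arbitrary: d) (simp_all add: rseq_aux_Suc)

lemma remarc_first_arc_in_D: "d \<in> D (Suc n) \<Longrightarrow> remarc (first_arc d) d \<in> D n"
  using remarc_in_D first_arc by blast

lemma rseq_eq_rseq_aux: "d \<in> D n \<Longrightarrow> rseq d = rseq_aux n d"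
  using matching_length[OF D_imp_matching] by (simp add: rseq_def)

lemma inj_on_rseq_aux: "inj_on (rseq_aux n) (D n)"
proof (induction n)
  case 0
  then show ?case using matching_length[OF D_imp_matching] by (intro inj_onI) (metis length_0_conv mult_0_right)
next
  case (Suc n)
  show ?case
  proof (rule inj_onI)
    fix d d' assume d: "d \<in> D (Suc n)" and d': "d' \<in> D (Suc n)" and eq: "rseq_aux (Suc n) d = rseq_aux (Suc n) d'"
    then have k: "first_arc d = first_arc d'"
      and "rseq_aux n (remarc (first_arc d) d) = rseq_aux n (remarc (first_arc d') d')"
      unfolding rseq_aux_Suc list.inject by blast+
    then have "remarc (first_arc d) d = remarc (first_arc d') d'"
      using inj_onD[OF Suc.IH _ remarc_first_arc_in_D[OF d] remarc_first_arc_in_D[OF d']] by blast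
    then show "d = d'"
      using lk_remarc[OF D_imp_matching[OF d] first_arc[OF d]]
        lk_remarc[OF D_imp_matching[OF d'] first_arc[OF d']] k by metis
  qed
qed

lemma e_rseq:
  assumes d: "d \<in> D n" shows "e (rseq d) = d"
  unfolding e_def
proof (rule the_equality)
  fix d' assume d': "d' \<in> D (length (rseq d)) \<and> rseq d' = rseq d"
  then have "d' \<in> D n" using d by (simp add: rseq_eq_rseq_aux)
  then show "d' = d"
    using d' d inj_onD[OF inj_on_rseq_aux, of n d' d] by (simp add: rseq_eq_rseq_aux)
qed (use d in \<open>simp add: rseq_eq_rseq_aux\<close>)

text \<open>An arc (k, k+1) of the reduced diagram with k + 1 < first_arc d would already be an arc of d.\<close>
lemma first_arc_le_first_arc_remarc:
  assumes d: "d \<in> D (Suc (Suc n))"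
  shows "first_arc d \<le> first_arc (remarc (first_arc d) d) + 1"
proof (rule ccontr)
  define k where "k = first_arc d"
  define k' where "k' = first_arc (remarc k d)"
  assume "\<not> ?thesis"
  then have less: "k' + 1 < k" by (simp add: k_def k'_def)
  have k': "1 \<le> k'" "k' \<le> 2 * n + 1" "partner (remarc k d) k' = k' + 1"
    using first_arc[OF remarc_first_arc_in_D[OF d]] by (simp_all add: k_def k'_def)
  have "shift k (partner (remarc k d) k') = partner d (shift k k')"
    using shift_partner_remarc[OF D_imp_matching[OF d] first_arc[OF d], of k'] k' by (simp add: k_def)
  moreover have "shift k k' = k'" "shift k (k' + 1) = k' + 1" using less by (simp_all add: shift_def)
  ultimately have "partner d k' = k' + 1" using k' by simp
  then show False using no_arc_before_first_arc[of k' d] k' less by (simp add: k_def)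
qed

lemma restricted_seq_rseq_aux: "d \<in> D (Suc n) \<Longrightarrow> restricted_seq (rseq_aux (Suc n) d)"
proof (induction n arbitrary: d)
  case 0
  have "partner d 1 = 2" using matching_partner[OF D_imp_matching[OF 0], of 1] by auto
  then have "first_arc d = 1" unfolding first_arc_def by (intro Least_equality) auto
  then show ?case by (simp add: rseq_aux_Suc)
next
  case (Suc n)
  then show ?case
    using Suc.IH[OF remarc_first_arc_in_D] first_arc_le_first_arc_remarc
    by (simp add: rseq_aux_Suc[of "Suc n"]) (simp add: rseq_aux_Suc)
qed

lemma restricted_seq_rseq: "d \<in> D (Suc n) \<Longrightarrow> restricted_seq (rseq d)"
  by (simp add: rseq_eq_rseq_aux restricted_seq_rseq_aux)

lemma hd_rseq: "d \<in> D (Suc n) \<Longrightarrow> hd (rseq d) = first_arc d"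
  by (simp add: rseq_eq_rseq_aux rseq_aux_Suc)

theorem mainTheorem12:
  fixes n j :: nat and b a :: "nat list"
  assumes "n \<ge> 2"
    and "length b = n" and "restricted n b"
    and "length a = n - 1" and "restricted (n - 1) a"
    and "1 \<le> j" and "j \<le> hd b - 2" and "hd b - 2 < hd a"
  shows "markov n (ind (e b)) (ep (j # a)) = 0"
proof -
  obtain n' where n: "n = Suc (Suc n')" using assms(1) by (metis add_2_eq_Suc le_Suc_ex)
  obtain \<beta> where \<beta>: "\<beta> \<in> D (Suc (Suc n'))" "rseq \<beta> = b" using assms(3) n by (auto simp: restricted_def)
  obtain \<alpha> where \<alpha>: "\<alpha> \<in> D (Suc n')" "rseq \<alpha> = a" using assms(5) n by (auto simp: restricted_def)
  have e_b: "e b = \<beta>" using e_rseq[OF \<beta>(1)] \<beta>(2) by simp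
  have hd_b: "hd b = first_arc \<beta>" using hd_rseq[OF \<beta>(1)] \<beta>(2) by simp
  have orth: "orthogonal_to_arcs_below (Suc n') (hd a) (ep a)"
    using orthogonal_ep[OF restricted_seq_rseq[OF \<alpha>(1)]] \<alpha>(2) assms(4) n by simp
  have "markov_diag n \<beta> (epa (ep a) j) = 0"
    using markov_diag_epa_left_of_arc[OF orth D_imp_matching[OF \<beta>(1)] first_arc[OF \<beta>(1)]]
      assms(6-8) hd_b n by simp
  moreover have "ep (j # a) = epa (ep a) j" using assms(4) n by (cases a) auto
  ultimately show ?thesis using markov_ind \<beta>(1) e_b n by simp
qed

end
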